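(* Consider a system with a set $\mathcal{R}$ of $n$ replicas, each with a unique identifier $\mathrm{id}(r)\in\{0,\dots,n-1\}$, a set $\mathcal{F}\subset\mathcal{R}$ of faulty replicas with $|\mathcal{F}|=f$, and $m$ instances numbered $1,\dots,m$ with $1\le m\le n-f$. Rounds are numbered $1,2,3,\dots$. Every non-faulty replica $r\in\mathcal{R}\setminus\mathcal{F}$ runs the following protocol, maintaining a set $\mathit{failed}$ and a map $\mathit{primary}:\{1,\dots,m\}\to\mathcal{R}$: - Initially $\mathit{failed}=\emptyset$ and $\mathit{primary}[i]$ is the replica with identifier $i-1$, for $1\le i\le m$. - In each round $\rho$, the replica learns a set $D_\rho\subseteq\{1,\dots,m\}$ of instances whose consensus decision in round $\rho$ was a failure. It then (1) sets $\mathit{failed}\leftarrow \mathit{failed}\cup\{\mathit{primary}[i]: i\in D_\rho\}$; and (2) for each $i\in D_\rho$ in increasing order of $i$: lets $\mathit{Im}=\{\mathit{primary}[j]:1\le j\le m\}$ (current values), chooses the replica $p\in\mathcal{R}\setminus(\mathit{failed}\cup \mathit{Im})$ with the smallest identifier, and sets $\mathit{primary}[i]\leftarrow p$. Assume: (a) all non-faulty replicas learn the same set $D_\rho$ in every round $\rho$; and (b) whenever $i\in D_\rho$, the primary of instance $i$ at the start of round $\rho$ (i.e., the common value of $\mathit{primary}[i]$ at non-faulty replicas at the start of round $\rho$, denoted $P_{i,\rho}$) is a faulty replica. For a non-faulty replica $r$ and round $\rho$, let $\mathit{failed}_\rho(r)$ and $\mathit{primary}_\rho(r)$ denote the values of these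 variables at $r$ at the start of round $\rho$. Then for every round $\rho$ and all non-faulty replicas $r,q$: 1. $\mathit{failed}_\rho(r)=\{P_{i,j}: i\in D_j,\ 1\le j<\rho\}$; 2. $\mathit{primary}_\rho(r)$ is an injective function and $\mathit{primary}_\rho(r)[i]\in\mathcal{R}\setminus\mathit{failed}_\rho(r)$ for all $1\le i\le m$; 3. $\mathit{primary}_\rho(r)=\mathit{primary}_\rho(q)$ and $\mathit{failed}_\rho(r)=\mathit{failed}_\rho(q)\subseteq\mathcal{F}$.
   Context: This models the "unified primary replacement protocol" for running $m$ parallel instances of a primary-backup Byzantine fault-tolerant consensus protocol: each instance has a primary replica, and in each round every instance reaches a consensus decision that is either a success or a failure (indicating primary failure), observed identically by all non-faulty replicas; instances whose decision is a failure get their primary replaced. *)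

theory Defs
  imports Main
begin

text \<open>Replicas form a finite set R of some type; idf is the identifier map, a bijection
  from R onto the identifiers 0..n-1.  Instances are the numbers 1..m.
  A replica's local state is a pair (failed, primary) with primary :: nat => replica
  (only its values on 1..m are meaningful).\<close>

definition choose_new :: "'r set \<Rightarrow> ('r \<Rightarrow> nat) \<Rightarrow> 'r set \<Rightarrow> 'r" where
  "choose_new R idf X = (SOME p. p \<in> R - X \<and> (\<forall>q \<in> R - X. idf p \<le> idf q))"

definition init_primary :: "'r set \<Rightarrow> ('r \<Rightarrow> nat) \<Rightarrow> nat \<Rightarrow> 'r" where
  "init_primary R idf = (\<lambda>i. inv_into R idf (i - 1))"

definition round_step ::
  "'r set \<Rightarrow> ('r \<Rightarrow> nat) \<Rightarrow> nat \<Rightarrow> nat set \<Rightarrow> 'r set \<times> (nat \<Rightarrow> 'r) \<Rightarrow> 'r set \<times> (nat \<Rightarrow> 'r)" where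
  "round_step R idf m Dset st =
     (let fl' = fst st \<union> snd st ` Dset;
          pr' = fold (\<lambda>i p. p(i := choose_new R idf (fl' \<union> p ` {1..m})))
                     (sorted_list_of_set Dset) (snd st)
      in (fl', pr'))"

primrec run ::
  "'r set \<Rightarrow> ('r \<Rightarrow> nat) \<Rightarrow> nat \<Rightarrow> (nat \<Rightarrow> nat set) \<Rightarrow> nat \<Rightarrow> 'r set \<times> (nat \<Rightarrow> 'r)" where
  "run R idf m Dr 0 = ({}, init_primary R idf)"
| "run R idf m Dr (Suc k) = round_step R idf m (Dr (Suc k)) (run R idf m Dr k)"

text \<open>Values at the start of round \<rho> (\<rho> \<ge> 1).\<close>
definition failed_at :: "'r set \<Rightarrow> ('r \<Rightarrow> nat) \<Rightarrow> nat \<Rightarrow> (nat \<Rightarrow> nat set) \<Rightarrow> nat \<Rightarrow> 'r set" where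
  "failed_at R idf m Dr \<rho> = fst (run R idf m Dr (\<rho> - 1))"

definition primary_at :: "'r set \<Rightarrow> ('r \<Rightarrow> nat) \<Rightarrow> nat \<Rightarrow> (nat \<Rightarrow> nat set) \<Rightarrow> nat \<Rightarrow> nat \<Rightarrow> 'r" where
  "primary_at R idf m Dr \<rho> = snd (run R idf m Dr (\<rho> - 1))"

end

theory Submission
  imports Defs
begin

text \<open>The state of a correct replica is a deterministic function of the learned sets,
  so correct replicas agree, and the failed set collects the primaries of failed
  instances, which are faulty.  The invariant that primary is injective on the
  instances and avoids failed is kept by each replacement: when instance i is
  replaced, its old primary already lies in failed, so the excluded set
  failed \<union> Im has at most f + (m - 1) < n elements and a free replica exists.\<close>

definition valid_state :: "'r set \<Rightarrow> 'r set \<Rightarrow> nat \<Rightarrow> 'r set \<times> (nat \<Rightarrow> 'r) \<Rightarrow> bool" where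
  "valid_state R F m st \<longleftrightarrow>
     fst st \<subseteq> F \<and> inj_on (snd st) {1..m} \<and> snd st ` {1..m} \<subseteq> R - fst st"

definition replace_primary ::
  "'r set \<Rightarrow> ('r \<Rightarrow> nat) \<Rightarrow> nat \<Rightarrow> 'r set \<Rightarrow> nat \<Rightarrow> (nat \<Rightarrow> 'r) \<Rightarrow> nat \<Rightarrow> 'r" where
  "replace_primary R idf m fl i p = p(i := choose_new R idf (fl \<union> p ` {1..m}))"

lemma round_step_eq:
  "round_step R idf m Dset (fl, p) =
     (fl \<union> p ` Dset,
      fold (replace_primary R idf m (fl \<union> p ` Dset)) (sorted_list_of_set Dset) p)"
  unfolding round_step_def replace_primary_def[abs_def] by simp

lemma choose_new_in:
  assumes "finite R" and "R - X \<noteq> {}"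
  shows "choose_new R idf X \<in> R - X"
proof -
  have "Min (idf ` (R - X)) \<in> idf ` (R - X)"
    using assms by (intro Min_in) auto
  then obtain p where "p \<in> R - X" and "idf p = Min (idf ` (R - X))"
    by auto
  then have "p \<in> R - X \<and> (\<forall>q \<in> R - X. idf p \<le> idf q)"
    using assms(1) by simp
  then show ?thesis
    unfolding choose_new_def by (rule someI[where P = "\<lambda>p. p \<in> R - X \<and> _ p", THEN conjunct1])
qed

lemma free_replica_exists:
  assumes "finite R" and "finite fl" and "card fl + m \<le> card R"
    and "i \<in> {1..m}" and "p i \<in> fl"
  shows "R - (fl \<union> p ` {1..m}) \<noteq> {}"
proof
  assume "R - (fl \<union> p ` {1..m}) = {}"
  then have "R \<subseteq> fl \<union> p ` ({1..m} - {i})"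
    using assms(5) by blast
  then have "card R \<le> card (fl \<union> p ` ({1..m} - {i}))"
    using assms(2) by (intro card_mono) auto
  also have "\<dots> \<le> card fl + card ({1..m} - {i})"
    by (intro order_trans[OF card_Un_le] add_left_mono card_image_le) simp
  also have "\<dots> < card R"
    using assms(3,4) by simp arith
  finally show False by simp
qed

lemma fold_replace_primary:
  assumes "finite R" and "finite fl" and "card fl + m \<le> card R"
  shows "distinct xs \<Longrightarrow> {i \<in> {1..m}. p i \<in> fl} = set xs \<Longrightarrow>
    inj_on p {1..m} \<Longrightarrow> p ` {1..m} \<subseteq> R \<Longrightarrow>
    inj_on (fold (replace_primary R idf m fl) xs p) {1..m} \<and>
    fold (replace_primary R idf m fl) xs p ` {1..m} \<subseteq> R - fl"
proof (induction xs arbitrary: p)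
  case Nil
  then show ?case by auto
next
  case (Cons i xs)
  let ?p' = "replace_primary R idf m fl i p"
  let ?c = "choose_new R idf (fl \<union> p ` {1..m})"
  have i: "i \<in> {1..m}" "p i \<in> fl"
    using Cons.prems(2) by auto
  have c: "?c \<in> R" "?c \<notin> fl" "?c \<notin> p ` {1..m}"
    using choose_new_in[OF assms(1) free_replica_exists[where p = p, OF assms i]] by auto
  have p': "?p' = p(i := ?c)"
    by (simp add: replace_primary_def)
  have "{j \<in> {1..m}. ?p' j \<in> fl} = {j \<in> {1..m}. p j \<in> fl} - {i}"
    using c(2) by (auto simp: p')
  also have "\<dots> = set xs"
    using Cons.prems(1,2) by auto
  finally have "{j \<in> {1..m}. ?p' j \<in> fl} = set xs" .
  moreover have "inj_on ?p' {1..m}"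
    unfolding p' using Cons.prems(3) c(3) by (intro inj_on_fun_updI) auto
  moreover have "?p' ` {1..m} \<subseteq> R"
    unfolding p' using Cons.prems(4) c(1) by auto
  ultimately show ?case
    using Cons.IH[of ?p'] Cons.prems(1) by simp
qed

lemma valid_state_round_step:
  assumes "finite R" and "finite F" and "card F + m \<le> card R"
    and "valid_state R F m st" and "Dset \<subseteq> {1..m}" and "snd st ` Dset \<subseteq> F"
  shows "valid_state R F m (round_step R idf m Dset st)"
proof -
  obtain fl p where st: "st = (fl, p)" by fastforce
  let ?fl = "fl \<union> p ` Dset"
  have fl: "?fl \<subseteq> F" and inj: "inj_on p {1..m}" and im: "p ` {1..m} \<subseteq> R - fl"
    using assms(4,6) st by (auto simp: valid_state_def)
  have "finite Dset"
    using assms(5) finite_subset by blast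
  have "{i \<in> {1..m}. p i \<in> ?fl} = set (sorted_list_of_set Dset)"
    using \<open>finite Dset\<close> assms(5) im inj by (auto simp: image_subset_iff dest: inj_onD)
  moreover have "finite ?fl" and "card ?fl + m \<le> card R"
    using fl assms(2,3) card_mono[OF assms(2) fl] finite_subset by auto
  moreover have "p ` {1..m} \<subseteq> R"
    using im by blast
  ultimately have
    "inj_on (fold (replace_primary R idf m ?fl) (sorted_list_of_set Dset) p) {1..m} \<and>
     fold (replace_primary R idf m ?fl) (sorted_list_of_set Dset) p ` {1..m} \<subseteq> R - ?fl"
    using fold_replace_primary[OF assms(1)] inj by simp
  then show ?thesis
    using fl by (simp add: st round_step_eq valid_state_def)
qed

lemma valid_state_init:
  assumes "bij_betw idf R {0..<n}" and "m \<le> n"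
  shows "valid_state R F m ({}, init_primary R idf)"
proof -
  have inv: "bij_betw (inv_into R idf) {0..<n} R"
    using assms(1) by (rule bij_betw_inv_into)
  have shift: "inj_on (\<lambda>i. i - 1) {1..m}" "(\<lambda>i. i - 1) ` {1..m} \<subseteq> {0..<n}"
    using assms(2) by (auto simp: inj_on_def)
  have "inj_on (inv_into R idf \<circ> (\<lambda>i. i - 1)) {1..m}"
    using shift inv by (intro comp_inj_on) (auto intro: inj_on_subset dest: bij_betw_imp_inj_on)
  moreover have "(inv_into R idf \<circ> (\<lambda>i. i - 1)) ` {1..m} \<subseteq> R"
    using shift inv by (auto simp: image_comp[symmetric] dest: bij_betw_imp_surj_on)
  ultimately show ?thesis
    by (simp add: valid_state_def init_primary_def comp_def)
qed

lemma valid_state_run: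
  assumes "bij_betw idf R {0..<n}" and "finite F" and "card F + m \<le> n"
    and "\<And>\<rho>. 1 \<le> \<rho> \<Longrightarrow> Dr \<rho> \<subseteq> {1..m}"
    and "\<And>\<rho>. 1 \<le> \<rho> \<Longrightarrow> snd (run R idf m Dr (\<rho> - 1)) ` Dr \<rho> \<subseteq> F"
  shows "valid_state R F m (run R idf m Dr k)"
proof (induction k)
  case 0
  show ?case
    using valid_state_init[OF assms(1)] assms(3) by simp
next
  case (Suc k)
  have "finite R" and "card R = n"
    using assms(1) bij_betw_finite bij_betw_same_card by fastforce+
  moreover have "Dr (Suc k) \<subseteq> {1..m}" and "snd (run R idf m Dr k) ` Dr (Suc k) \<subseteq> F"
    using assms(4,5)[of "Suc k"] by simp_all
  ultimately show ?case
    using Suc.IH assms(2,3) by (simp add: valid_state_round_step)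
qed

lemma fst_run:
  "fst (run R idf m Dr k) = {snd (run R idf m Dr (j - 1)) i | i j. 1 \<le> j \<and> j < Suc k \<and> i \<in> Dr j}"
proof (induction k)
  case 0
  show ?case by simp
next
  case (Suc k)
  let ?failed = "\<lambda>k. {snd (run R idf m Dr (j - 1)) i | i j. 1 \<le> j \<and> j < Suc k \<and> i \<in> Dr j}"
  have "snd (run R idf m Dr k) i \<in> ?failed (Suc k)" if "i \<in> Dr (Suc k)" for i
    using that by (intro CollectI exI[of _ i] exI[of _ "Suc k"]) simp
  then have "?failed k \<union> snd (run R idf m Dr k) ` Dr (Suc k) = ?failed (Suc k)"
    by (intro equalityI) (force, auto simp: less_Suc_eq)
  then show ?case
    by (simp add: round_step_def Let_def Suc.IH)
qed

lemma run_cong: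
  assumes "\<And>j. 1 \<le> j \<Longrightarrow> D1 j = D2 j"
  shows "run R idf m D1 k = run R idf m D2 k"
  by (induction k) (simp_all add: assms)

theorem proposition2:
  fixes R F :: "'r set" and idf :: "'r \<Rightarrow> nat" and n f m :: nat
    and D :: "'r \<Rightarrow> nat \<Rightarrow> nat set"
  assumes "finite R" and "card R = n"
    and "bij_betw idf R {0..<n}"
    and "F \<subset> R" and "card F = f"
    and "1 \<le> m" and "m \<le> n - f"
    and "\<And>r \<rho>. r \<in> R - F \<Longrightarrow> 1 \<le> \<rho> \<Longrightarrow> D r \<rho> \<subseteq> {1..m}"
    and "\<And>r q \<rho>. r \<in> R - F \<Longrightarrow> q \<in> R - F \<Longrightarrow> 1 \<le> \<rho> \<Longrightarrow> D r \<rho> = D q \<rho>"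
    and "\<And>r \<rho> i. r \<in> R - F \<Longrightarrow> 1 \<le> \<rho> \<Longrightarrow> i \<in> D r \<rho> \<Longrightarrow>
           primary_at R idf m (D r) \<rho> i \<in> F"
    and "r \<in> R - F" and "q \<in> R - F" and "1 \<le> \<rho>"
  shows "(failed_at R idf m (D r) \<rho> =
           {primary_at R idf m (D r) j i | i j. 1 \<le> j \<and> j < \<rho> \<and> i \<in> D r j})
    \<and> inj_on (primary_at R idf m (D r) \<rho>) {1..m}
         \<and> (\<forall>i \<in> {1..m}. primary_at R idf m (D r) \<rho> i \<in> R - failed_at R idf m (D r) \<rho>)
    \<and> primary_at R idf m (D r) \<rho> = primary_at R idf m (D q) \<rho>
         \<and> failed_at R idf m (D r) \<rho> = failed_at R idf m (D q) \<rho>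
         \<and> failed_at R idf m (D q) \<rho> \<subseteq> F"
proof -
  let ?run = "run R idf m (D r) (\<rho> - 1)"
  have "finite F"
    using assms(1,4) finite_subset by blast
  moreover have "card F + m \<le> n"
    using psubset_card_mono[OF assms(1,4)] assms(2,5,7) by simp
  moreover have "D r j \<subseteq> {1..m}" if "1 \<le> j" for j
    using assms(8)[OF assms(11) that] .
  moreover have "snd (run R idf m (D r) (j - 1)) ` D r j \<subseteq> F" if "1 \<le> j" for j
    using assms(10)[OF assms(11) that] by (auto simp: primary_at_def)
  ultimately have "valid_state R F m ?run"
    by (rule valid_state_run[OF assms(3)])
  moreover have "?run = run R idf m (D q) (\<rho> - 1)"
    using assms(9,11,12) by (intro run_cong) blast
  moreover have "failed_at R idf m (D r) \<rho> =
      {primary_at R idf m (D r) j i | i j. 1 \<le> j \<and> j < \<rho> \<and> i \<in> D r j}"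
    using assms(13) by (simp add: failed_at_def primary_at_def fst_run)
  ultimately show ?thesis
    unfolding valid_state_def failed_at_def primary_at_def by (simp add: image_subset_iff)
qed

end
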